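(* If the tree $\Upsilon$ is $\mathbb{R}$-embeddable, then there exists a bounded linear injection from $C_0(\Upsilon)$ into $c_0(\Upsilon)$. Consequently $C_0(\Upsilon)$ admits an equivalent strictly convex norm.
   Context: A tree is a partially ordered set $(\Upsilon,\preceq)$ such that for each $t$ the set $(0,t]=\{s:s\preceq t\}$ is well-ordered; let $r(t)$ be the order type of $(0,t)=\{s:s\prec t\}$. Trees are assumed Hausdorff: if $r(t)$ is a limit ordinal and $(0,t)=(0,t')$ then $t=t'$. $\Upsilon$ carries the coarsest topology in which every $(0,t]$ is open and closed, and $C_0(\Upsilon)$ is the space of continuous $f:\Upsilon\to\mathbb{R}$ with $\{|f|\ge\epsilon\}$ compact for every $\epsilon>0$, with the supremum norm. $\Upsilon$ is $\mathbb{R}$-embeddable if there is $\rho:\Upsilon\to\mathbb{R}$ with $s\prec t\Rightarrow\rho(s)<\rho(t)$. A norm is strictly convex if $\|x\|=\|y\|=\tfrac12\|x+y\|$ implies $x=y$. *)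

theory Defs
  imports "HOL-Analysis.Analysis"
begin

text \<open>A tree is modelled as a type of class order (the whole type is the tree,
  the partial order is the tree order).\<close>

definition tree_wellordered :: "'a::order itself \<Rightarrow> bool" where
  "tree_wellordered _ \<longleftrightarrow>
     (\<forall>t::'a. \<forall>S. S \<subseteq> {s. s \<le> t} \<and> S \<noteq> {} \<longrightarrow> (\<exists>m\<in>S. \<forall>x\<in>S. m \<le> x))"

text \<open>r(t), the order type of (0,t) = {s. s < t}, is a (nonzero) limit ordinal:
  (0,t) is nonempty and has no largest element.\<close>

definition limit_height :: "'a::order \<Rightarrow> bool" where
  "limit_height t \<longleftrightarrow> {s. s < t} \<noteq> {} \<and> (\<forall>s. s < t \<longrightarrow> (\<exists>u. s < u \<and> u < t))"

definition tree_hausdorff :: "'a::order itself \<Rightarrow> bool" where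
  "tree_hausdorff _ \<longleftrightarrow>
     (\<forall>t t'::'a. limit_height t \<and> {s. s < t} = {s. s < t'} \<longrightarrow> t = t')"

definition is_tree :: "'a::order itself \<Rightarrow> bool" where
  "is_tree X \<longleftrightarrow> tree_wellordered X \<and> tree_hausdorff X"

definition tree_topology :: "'a::order topology" where
  "tree_topology = topology_generated_by
     ({{s. s \<le> t} | t. True} \<union> {- {s. s \<le> t} | t. True})"

definition R_embeddable :: "'a::order itself \<Rightarrow> bool" where
  "R_embeddable _ \<longleftrightarrow> (\<exists>\<rho>::'a \<Rightarrow> real. \<forall>s t. s < t \<longrightarrow> \<rho> s < \<rho> t)"

definition C0_tree :: "('a::order \<Rightarrow> real) set" where
  "C0_tree = {f. continuous_map tree_topology euclideanreal f \<and>
       (\<forall>e>0. compactin tree_topology {x. \<bar>f x\<bar> \<ge> e})}"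

definition c0_fun :: "('a \<Rightarrow> real) set" where
  "c0_fun = {g. \<forall>e>0. finite {x. \<bar>g x\<bar> \<ge> e}}"

definition supnorm :: "('a \<Rightarrow> real) \<Rightarrow> real" where
  "supnorm f = (SUP x. \<bar>f x\<bar>)"

definition bounded_linear_injection_on ::
  "('a \<Rightarrow> real) set \<Rightarrow> ('b \<Rightarrow> real) set \<Rightarrow> (('a \<Rightarrow> real) \<Rightarrow> ('b \<Rightarrow> real)) \<Rightarrow> bool" where
  "bounded_linear_injection_on A B T \<longleftrightarrow>
     (\<forall>f\<in>A. T f \<in> B) \<and>
     (\<forall>f\<in>A. \<forall>g\<in>A. \<forall>a b. T (\<lambda>x. a * f x + b * g x) = (\<lambda>y. a * T f y + b * T g y)) \<and>
     (\<exists>M. \<forall>f\<in>A. supnorm (T f) \<le> M * supnorm f) \<and>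
     inj_on T A"

definition norm_on :: "('a \<Rightarrow> real) set \<Rightarrow> (('a \<Rightarrow> real) \<Rightarrow> real) \<Rightarrow> bool" where
  "norm_on A N \<longleftrightarrow>
     (\<forall>f\<in>A. N f \<ge> 0 \<and> (N f = 0 \<longleftrightarrow> f = (\<lambda>x. 0))) \<and>
     (\<forall>f\<in>A. \<forall>c. N (\<lambda>x. c * f x) = \<bar>c\<bar> * N f) \<and>
     (\<forall>f\<in>A. \<forall>g\<in>A. N (\<lambda>x. f x + g x) \<le> N f + N g)"

definition equivalent_to_supnorm_on :: "('a \<Rightarrow> real) set \<Rightarrow> (('a \<Rightarrow> real) \<Rightarrow> real) \<Rightarrow> bool" where
  "equivalent_to_supnorm_on A N \<longleftrightarrow>
     (\<exists>a b. 0 < a \<and> 0 < b \<and> (\<forall>f\<in>A. a * supnorm f \<le> N f \<and> N f \<le> b * supnorm f))"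

definition strictly_convex_on :: "('a \<Rightarrow> real) set \<Rightarrow> (('a \<Rightarrow> real) \<Rightarrow> real) \<Rightarrow> bool" where
  "strictly_convex_on A N \<longleftrightarrow>
     (\<forall>f\<in>A. \<forall>g\<in>A. N f = N g \<and> N g = (1/2) * N (\<lambda>x. f x + g x) \<longrightarrow> f = g)"

end

theory Submission
  imports Defs
begin

(* Let rho embed the tree in the reals and let q_0, q_1, ... enumerate the rationals. Call a node
   t marked by n if it is the least node with q_n <= rho t. Multiplying f by 2^-n at the nodes
   marked by n, and by 0 at unmarked nodes, is a bounded linear map C_0 -> c_0: the nodes marked
   by a fixed n form an antichain, which meets every compact set in finitely many points. It is
   injective because an unmarked node is a limit node, every neighbourhood of which contains
   marked nodes below it (here the tree must be Hausdorff).

   A space with a bounded linear injection T into c_0 has an equivalent strictly convex norm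
   (Day): N f^2 = ||f||^2 + sum_{j>=1} 4^-j Q_j(T f)^2, where Q_j x is the l2 norm of the j
   largest values of |x|. Equality in the triangle inequality for N forces Q_j(T f) = Q_j(T g)
   and Q_j(T f + T g) = Q_j(T f) + Q_j(T g) for all j, and these equations determine T f = T g. *)

section \<open>Sup norm and c0\<close>

definition bounded_fun :: "('a \<Rightarrow> real) \<Rightarrow> bool" where
  "bounded_fun f \<longleftrightarrow> (\<exists>B. \<forall>x. \<bar>f x\<bar> \<le> B)"

lemma abs_le_supnorm: "bounded_fun f \<Longrightarrow> \<bar>f x\<bar> \<le> supnorm f"
  unfolding supnorm_def bounded_fun_def by (rule cSUP_upper) (auto simp: bdd_above_def)

lemma supnorm_le: "(\<And>x. \<bar>f x\<bar> \<le> B) \<Longrightarrow> supnorm f \<le> B"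
  unfolding supnorm_def by (rule cSUP_least) auto

lemma supnorm_nonneg: "bounded_fun f \<Longrightarrow> 0 \<le> supnorm f"
  using abs_le_supnorm[of f undefined] by linarith

lemma supnorm_eq_0_iff:
  assumes "bounded_fun f"
  shows "supnorm f = 0 \<longleftrightarrow> f = (\<lambda>x. 0)"
proof
  assume "supnorm f = 0"
  then have "\<bar>f x\<bar> \<le> 0" for x using abs_le_supnorm[OF assms, of x] by simp
  then show "f = (\<lambda>x. 0)" by auto
qed (simp add: supnorm_def)

lemma bounded_fun_add: "bounded_fun f \<Longrightarrow> bounded_fun g \<Longrightarrow> bounded_fun (\<lambda>x. f x + g x)"
  unfolding bounded_fun_def by (metis abs_triangle_ineq add_mono order_trans)

lemma supnorm_triangle:
  "bounded_fun f \<Longrightarrow> bounded_fun g \<Longrightarrow> supnorm (\<lambda>x. f x + g x) \<le> supnorm f + supnorm g"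
  by (rule supnorm_le) (metis abs_triangle_ineq add_mono order_trans abs_le_supnorm)

lemma supnorm_scale_le: "bounded_fun f \<Longrightarrow> supnorm (\<lambda>x. c * f x) \<le> \<bar>c\<bar> * supnorm f"
  by (rule supnorm_le) (simp add: abs_mult mult_left_mono abs_le_supnorm)

lemma supnorm_scale:
  assumes f: "bounded_fun f"
  shows "supnorm (\<lambda>x. c * f x) = \<bar>c\<bar> * supnorm f"
proof (cases "c = 0")
  case True
  then show ?thesis by (simp add: supnorm_def)
next
  case False
  have cf: "bounded_fun (\<lambda>x. c * f x)"
    using f unfolding bounded_fun_def by (metis abs_ge_zero abs_mult mult_left_mono)
  have "(\<lambda>x. inverse c * (c * f x)) = f"
    using False by (simp add: mult.assoc[symmetric])
  then have "supnorm f = supnorm (\<lambda>x. inverse c * (c * f x))"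
    by simp
  also have "\<dots> \<le> \<bar>inverse c\<bar> * supnorm (\<lambda>x. c * f x)"
    by (rule supnorm_scale_le[OF cf])
  finally have "\<bar>c\<bar> * supnorm f \<le> supnorm (\<lambda>x. c * f x)"
    using False by (simp add: abs_inverse field_simps)
  then show ?thesis using supnorm_scale_le[OF f, of c] by linarith
qed

lemma c0_funD: "x \<in> c0_fun \<Longrightarrow> e > 0 \<Longrightarrow> finite {g. e \<le> \<bar>x g\<bar>}"
  by (simp add: c0_fun_def)

lemma c0_fun_add:
  assumes "x \<in> c0_fun" "y \<in> c0_fun"
  shows "(\<lambda>g. x g + y g) \<in> c0_fun"
  unfolding c0_fun_def
proof (intro CollectI allI impI)
  fix e :: real assume "e > 0"
  have "{g. e \<le> \<bar>x g + y g\<bar>} \<subseteq> {g. e/2 \<le> \<bar>x g\<bar>} \<union> {g. e/2 \<le> \<bar>y g\<bar>}" by auto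
  then show "finite {g. e \<le> \<bar>x g + y g\<bar>}"
    using c0_funD[OF assms(1), of "e/2"] c0_funD[OF assms(2), of "e/2"] \<open>e > 0\<close>
    by (auto intro: finite_subset)
qed

lemma c0_fun_bounded:
  assumes "x \<in> c0_fun"
  shows "bounded_fun x"
proof -
  let ?S = "{g. 1 \<le> \<bar>x g\<bar>}"
  have "finite ?S" using c0_funD[OF assms] by simp
  moreover have "0 \<le> (\<Sum>h\<in>?S. \<bar>x h\<bar>)" by (simp add: sum_nonneg)
  ultimately have "\<bar>x g\<bar> \<le> 1 + (\<Sum>h\<in>?S. \<bar>x h\<bar>)" for g
    using member_le_sum[of g ?S "\<lambda>h. \<bar>x h\<bar>"] by (cases "g \<in> ?S") (auto simp del: sum_abs_ge_zero)
  then show ?thesis unfolding bounded_fun_def by blast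
qed

section \<open>Day's seminorms on c0\<close>

definition card_le_sets :: "nat \<Rightarrow> 'a set set" where
  "card_le_sets k = {F. finite F \<and> card F \<le> k}"

text \<open>For x in c0 the supremum is attained (L2_set_maximizer_exists), so top_l2 k x is the
  l2 norm of the k largest values of |x|.\<close>

definition top_l2 :: "nat \<Rightarrow> ('a \<Rightarrow> real) \<Rightarrow> real" where
  "top_l2 k x = (SUP F\<in>card_le_sets k. L2_set x F)"

lemma empty_in_card_le_sets: "{} \<in> card_le_sets k"
  by (simp add: card_le_sets_def)

lemma L2_set_power2: "finite F \<Longrightarrow> (L2_set x F)^2 = (\<Sum>g\<in>F. (x g)^2)"
  unfolding L2_set_def by (simp add: sum_nonneg)

lemma L2_set_le_iff:
  "finite F \<Longrightarrow> finite G \<Longrightarrow> L2_set x F \<le> L2_set x G \<longleftrightarrow> (\<Sum>g\<in>F. (x g)^2) \<le> (\<Sum>g\<in>G. (x g)^2)"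
  unfolding L2_set_def by simp

lemma sum_power2_exchange:
  fixes x :: "'a \<Rightarrow> real"
  assumes G: "finite G" and S: "finite S" and card: "card G \<le> card S" and "0 \<le> e"
    and small: "\<And>g. g \<in> G - S \<Longrightarrow> \<bar>x g\<bar> \<le> e" and large: "\<And>h. h \<in> S \<Longrightarrow> e \<le> \<bar>x h\<bar>"
  shows "\<exists>G'\<subseteq>S. card G' = card G \<and> (\<Sum>g\<in>G. (x g)^2) \<le> (\<Sum>g\<in>G'. (x g)^2)"
proof -
  have "card (G - S) = card G - card (G \<inter> S)"
    by (metis G card_Diff_subset_Int Diff_Int2 finite_Int inf_left_idem)
  moreover have "card (S - G) = card S - card (G \<inter> S)"
    by (metis S card_Diff_subset_Int Diff_Int2 Int_commute finite_Int inf_left_idem)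
  ultimately have "card (G - S) \<le> card (S - G)" using card by linarith
  then obtain H where H: "H \<subseteq> S - G" "card H = card (G - S)" "finite H"
    using obtain_subset_with_card_n by blast
  let ?G' = "(G \<inter> S) \<union> H"
  have disj: "(G \<inter> S) \<inter> H = {}" using H by auto
  have "card ?G' = card (G \<inter> S) + card (G - S)" using disj G H by (simp add: card_Un_disjoint)
  then have "card ?G' = card G" using G by (metis card_Int_Diff)
  moreover have "(\<Sum>g\<in>G - S. (x g)^2) \<le> (\<Sum>g\<in>H. (x g)^2)"
  proof -
    have "(\<Sum>g\<in>G - S. (x g)^2) \<le> (\<Sum>g\<in>G - S. e^2)"
      by (rule sum_mono) (metis small abs_ge_zero power2_abs power_mono)
    also have "\<dots> = (\<Sum>g\<in>H. e^2)" using H by simp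
    also have "\<dots> \<le> (\<Sum>g\<in>H. (x g)^2)"
      by (rule sum_mono) (use H large \<open>0 \<le> e\<close> in \<open>metis power2_abs power_mono subsetD Diff_iff\<close>)
    finally show ?thesis .
  qed
  then have "(\<Sum>g\<in>G. (x g)^2) \<le> (\<Sum>g\<in>?G'. (x g)^2)"
    using G H disj by (simp add: sum.union_disjoint sum.Int_Diff[of G _ S])
  moreover have "?G' \<subseteq> S" using H by auto
  ultimately show ?thesis by blast
qed

lemma card_le_sets_reduce_to_finite:
  fixes x :: "'a \<Rightarrow> real"
  assumes x: "x \<in> c0_fun"
  shows "\<exists>S. finite S \<and> (\<forall>G\<in>card_le_sets k. \<exists>G'\<in>card_le_sets k. G' \<subseteq> S \<and> L2_set x G \<le> L2_set x G')"
proof (cases "finite {g. x g \<noteq> 0}")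
  case True
  let ?Z = "{g. x g \<noteq> 0}"
  show ?thesis
  proof (intro exI[of _ ?Z] conjI ballI)
    fix G :: "'a set" assume G: "G \<in> card_le_sets k"
    then have "G \<inter> ?Z \<in> card_le_sets k"
      by (auto simp: card_le_sets_def intro: card_mono order_trans)
    moreover have "L2_set x G = L2_set x (G \<inter> ?Z)"
      unfolding L2_set_def using G
      by (intro arg_cong[where f=sqrt] sum.mono_neutral_right) (auto simp: card_le_sets_def)
    ultimately show "\<exists>G'\<in>card_le_sets k. G' \<subseteq> ?Z \<and> L2_set x G \<le> L2_set x G'"
      by (intro bexI[of _ "G \<inter> ?Z"]) auto
  qed (use True in simp)
next
  case False
  obtain E where E: "finite E" "card E = Suc k" "E \<subseteq> {g. x g \<noteq> 0}"
    using infinite_arbitrarily_large[OF False] by blast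
  define e where "e = Min ((\<lambda>g. \<bar>x g\<bar>) ` E)"
  have "E \<noteq> {}" using E by auto
  then have "e > 0" unfolding e_def using E by (subst Min_gr_iff) auto
  let ?S = "{g. e \<le> \<bar>x g\<bar>}"
  have S: "finite ?S" using c0_funD[OF x \<open>e > 0\<close>] .
  have "E \<subseteq> ?S" unfolding e_def using E by auto
  then have "card E \<le> card ?S" by (rule card_mono[OF S])
  then have cS: "Suc k \<le> card ?S" using E(2) by simp
  show ?thesis
  proof (intro exI[of _ ?S] conjI ballI)
    fix G :: "'a set" assume "G \<in> card_le_sets k"
    then have G: "finite G" "card G \<le> k" by (auto simp: card_le_sets_def)
    have "card G \<le> card ?S" using G(2) cS by linarith
    moreover have "\<bar>x g\<bar> \<le> e" if "g \<in> G - ?S" for g using that by auto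
    ultimately obtain G' where G': "G' \<subseteq> ?S" "card G' = card G" "(\<Sum>g\<in>G. (x g)^2) \<le> (\<Sum>g\<in>G'. (x g)^2)"
      using sum_power2_exchange[OF G(1) S _ less_imp_le[OF \<open>e > 0\<close>], of x] by blast
    have "finite G'" using G'(1) S finite_subset by blast
    then show "\<exists>G'\<in>card_le_sets k. G' \<subseteq> ?S \<and> L2_set x G \<le> L2_set x G'"
      using G G' L2_set_le_iff[OF G(1)] by (intro bexI[of _ G']) (auto simp: card_le_sets_def)
  qed (use S in simp)
qed

lemma L2_set_maximizer_exists:
  fixes x :: "'a \<Rightarrow> real"
  assumes "x \<in> c0_fun"
  shows "\<exists>F\<in>card_le_sets k. \<forall>G\<in>card_le_sets k. L2_set x G \<le> L2_set x F"
proof -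
  obtain S :: "'a set" where S: "finite S"
    and reduce: "\<forall>G\<in>card_le_sets k. \<exists>G'\<in>card_le_sets k. G' \<subseteq> S \<and> L2_set x G \<le> L2_set x G'"
    using card_le_sets_reduce_to_finite[OF assms, of k] by (elim exE conjE)
  let ?A = "{G\<in>card_le_sets k. G \<subseteq> S}"
  have fin: "finite ?A"
    using S by (rule finite_subset[rotated, OF finite_Pow_iff[THEN iffD2]]) auto
  have "{} \<in> ?A" using empty_in_card_le_sets by auto
  then have "Max (L2_set x ` ?A) \<in> L2_set x ` ?A" using fin by (intro Max_in) auto
  then obtain F where F: "F \<in> ?A" "L2_set x F = Max (L2_set x ` ?A)" by auto
  show ?thesis
  proof (intro bexI[of _ F] ballI)
    fix G :: "'a set" assume "G \<in> card_le_sets k"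
    then obtain G' where "G' \<in> ?A" "L2_set x G \<le> L2_set x G'" using reduce by blast
    moreover have "L2_set x G' \<le> Max (L2_set x ` ?A)" using fin \<open>G' \<in> ?A\<close> by (intro Max_ge) auto
    ultimately show "L2_set x G \<le> L2_set x F" using F(2) by linarith
  qed (use F in auto)
qed

lemma top_l2_eq_maximum:
  assumes "F \<in> card_le_sets k" "\<forall>G\<in>card_le_sets k. L2_set x G \<le> L2_set x F"
  shows "top_l2 k x = L2_set x F"
  unfolding top_l2_def using assms by (intro cSup_eq_maximum) auto

lemma L2_set_le_top_l2:
  assumes "x \<in> c0_fun" "G \<in> card_le_sets k"
  shows "L2_set x G \<le> top_l2 k x"
  using L2_set_maximizer_exists[OF assms(1), of k] top_l2_eq_maximum assms(2) by fastforce

lemma top_l2_nonneg: "x \<in> c0_fun \<Longrightarrow> 0 \<le> top_l2 k x"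
  using L2_set_le_top_l2[OF _ empty_in_card_le_sets] by fastforce

lemma top_l2_triangle:
  assumes "x \<in> c0_fun" "y \<in> c0_fun"
  shows "top_l2 k (\<lambda>g. x g + y g) \<le> top_l2 k x + top_l2 k y"
proof -
  obtain F where F: "F \<in> card_le_sets k"
    "\<forall>G\<in>card_le_sets k. L2_set (\<lambda>g. x g + y g) G \<le> L2_set (\<lambda>g. x g + y g) F"
    using L2_set_maximizer_exists[OF c0_fun_add[OF assms]] by blast
  have "top_l2 k (\<lambda>g. x g + y g) = L2_set (\<lambda>g. x g + y g) F" by (rule top_l2_eq_maximum[OF F])
  also have "\<dots> \<le> L2_set x F + L2_set y F" by (rule L2_set_triangle_ineq)
  also have "\<dots> \<le> top_l2 k x + top_l2 k y"
    using L2_set_le_top_l2[OF assms(1) F(1)] L2_set_le_top_l2[OF assms(2) F(1)] by linarith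
  finally show ?thesis .
qed

lemma L2_set_scale: "L2_set (\<lambda>g. c * x g) F = \<bar>c\<bar> * L2_set x F"
proof -
  have "L2_set (\<lambda>g. c * x g) F = L2_set (\<lambda>g. \<bar>c\<bar> * x g) F"
    unfolding L2_set_def by (simp add: power_mult_distrib)
  also have "\<dots> = \<bar>c\<bar> * L2_set x F" by (simp add: L2_set_right_distrib)
  finally show ?thesis .
qed

lemma top_l2_scale:
  assumes "x \<in> c0_fun"
  shows "top_l2 k (\<lambda>g. c * x g) = \<bar>c\<bar> * top_l2 k x"
proof -
  obtain F where F: "F \<in> card_le_sets k" "\<forall>G\<in>card_le_sets k. L2_set x G \<le> L2_set x F"
    using L2_set_maximizer_exists[OF assms] by blast
  then have "\<forall>G\<in>card_le_sets k. L2_set (\<lambda>g. c * x g) G \<le> L2_set (\<lambda>g. c * x g) F"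
    by (simp add: L2_set_scale mult_left_mono)
  then show ?thesis using top_l2_eq_maximum[OF F(1)] top_l2_eq_maximum[OF F] by (simp add: L2_set_scale)
qed

lemma top_l2_bound:
  assumes "x \<in> c0_fun" "\<And>g. \<bar>x g\<bar> \<le> B"
  shows "(top_l2 k x)^2 \<le> real k * B^2"
proof -
  obtain F where F: "F \<in> card_le_sets k" "\<forall>G\<in>card_le_sets k. L2_set x G \<le> L2_set x F"
    using L2_set_maximizer_exists[OF assms(1)] by blast
  then have fin: "finite F" and card: "card F \<le> k" by (auto simp: card_le_sets_def)
  have "(top_l2 k x)^2 = (\<Sum>g\<in>F. (x g)^2)" using top_l2_eq_maximum[OF F] L2_set_power2[OF fin] by simp
  also have "\<dots> \<le> (\<Sum>g\<in>F. B^2)"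
    by (rule sum_mono) (metis abs_ge_zero assms(2) power2_abs power_mono)
  also have "\<dots> \<le> real k * B^2" using card by (simp add: mult_right_mono)
  finally show ?thesis .
qed

lemma L2_set_triangle_eq_imp_eq:
  assumes "finite F" "L2_set x F = L2_set y F"
    and "L2_set (\<lambda>g. x g + y g) F = L2_set x F + L2_set y F"
  shows "\<forall>g\<in>F. x g = y g"
proof -
  let ?a = "L2_set x F"
  have "(\<Sum>g\<in>F. (x g - y g)^2) = (\<Sum>g\<in>F. 2*(x g)^2 + 2*(y g)^2 - (x g + y g)^2)"
    by (rule sum.cong) (auto simp: power2_eq_square algebra_simps)
  also have "\<dots> = 2 * (\<Sum>g\<in>F. (x g)^2) + 2 * (\<Sum>g\<in>F. (y g)^2) - (\<Sum>g\<in>F. (x g + y g)^2)"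
    by (simp add: sum_subtractf sum.distrib sum_distrib_left)
  also have "\<dots> = 2 * ?a^2 + 2 * ?a^2 - (2 * ?a)^2"
    using assms by (simp add: L2_set_power2[symmetric])
  also have "\<dots> = 0" by (simp add: power2_eq_square)
  finally show ?thesis using assms(1) by (subst (asm) sum_nonneg_eq_0_iff) auto
qed

text \<open>Otherwise g could be added to F, or swapped in for an element of F where |x| is smaller,
  increasing the sum of squares.\<close>

lemma L2_set_maximizer_mem:
  assumes x: "x \<in> c0_fun" and xg: "x g \<noteq> 0"
    and k: "k = card {d. \<bar>x g\<bar> \<le> \<bar>x d\<bar>}"
    and F: "F \<in> card_le_sets k" "\<forall>G\<in>card_le_sets k. L2_set x G \<le> L2_set x F"
  shows "g \<in> F"
proof (rule ccontr)
  assume gF: "g \<notin> F"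
  let ?A = "{d. \<bar>x g\<bar> \<le> \<bar>x d\<bar>}"
  have fA: "finite ?A" using c0_funD[OF x, of "\<bar>x g\<bar>"] xg by simp
  have fF: "finite F" "card F \<le> k" using F(1) by (auto simp: card_le_sets_def)
  have pos: "(x g)^2 > 0" using xg by simp
  obtain G where G: "G \<in> card_le_sets k" "(\<Sum>d\<in>F. (x d)^2) < (\<Sum>d\<in>G. (x d)^2)"
  proof (cases "card F < k")
    case True
    then have "insert g F \<in> card_le_sets k" using fF gF by (simp add: card_le_sets_def)
    moreover have "(\<Sum>d\<in>insert g F. (x d)^2) = (x g)^2 + (\<Sum>d\<in>F. (x d)^2)" using fF gF by simp
    ultimately show ?thesis using pos that by auto
  next
    case False
    have "\<not> F \<subseteq> ?A - {g}"
    proof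
      assume "F \<subseteq> ?A - {g}"
      then have "card F \<le> card (?A - {g})" using fA by (intro card_mono) auto
      also have "\<dots> < card ?A" using fA by (rule card_Diff1_less) simp
      finally show False using False k by simp
    qed
    then obtain d where "d \<in> F" "d \<notin> ?A - {g}" by blast
    then have d: "d \<in> F" "\<bar>x d\<bar> < \<bar>x g\<bar>" using gF by auto
    let ?G = "insert g (F - {d})"
    have "card ?G = card F" using fF d gF by (simp add: card_Diff1_less)
      (metis One_nat_def Suc_pred card_gt_0_iff empty_iff)
    then have "?G \<in> card_le_sets k" using fF by (simp add: card_le_sets_def)
    moreover have "(\<Sum>e\<in>?G. (x e)^2) = (x g)^2 + (\<Sum>e\<in>F. (x e)^2) - (x d)^2"
      using fF gF d by (simp add: sum_diff1)
    moreover have "(x d)^2 < (x g)^2"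
      using d(2) by (metis abs_ge_zero power2_abs power_strict_mono zero_less_numeral)
    ultimately show ?thesis using that by auto
  qed
  moreover have "finite G" using G(1) by (simp add: card_le_sets_def)
  ultimately show False using F(2) L2_set_le_iff[OF _ fF(1), of G x] by auto
qed

text \<open>A set F maximizing the l2 norm of x + y over sets of size k also maximizes it for x and
  for y, by additivity. So g \<in> F by the previous lemma, and x = y on F by the equality case of
  the triangle inequality in l2.\<close>

lemma top_l2_additive_imp_eq_at:
  assumes x: "x \<in> c0_fun" and y: "y \<in> c0_fun"
    and eq: "\<And>k. k > 0 \<Longrightarrow> top_l2 k x = top_l2 k y"
    and add: "\<And>k. k > 0 \<Longrightarrow> top_l2 k (\<lambda>g. x g + y g) = top_l2 k x + top_l2 k y"
    and xg: "x g \<noteq> 0"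
  shows "x g = y g"
proof -
  define k where "k = card {d. \<bar>x g\<bar> \<le> \<bar>x d\<bar>}"
  have "finite {d. \<bar>x g\<bar> \<le> \<bar>x d\<bar>}" using c0_funD[OF x, of "\<bar>x g\<bar>"] xg by simp
  then have "k > 0" unfolding k_def by (subst card_gt_0_iff) auto
  let ?z = "\<lambda>g. x g + y g"
  obtain F where F: "F \<in> card_le_sets k" "\<forall>G\<in>card_le_sets k. L2_set ?z G \<le> L2_set ?z F"
    using L2_set_maximizer_exists[OF c0_fun_add[OF x y]] by blast
  have "L2_set ?z F = top_l2 k x + top_l2 k y"
    using top_l2_eq_maximum[OF F] add[OF \<open>k > 0\<close>] by simp
  moreover have "L2_set ?z F \<le> L2_set x F + L2_set y F" by (rule L2_set_triangle_ineq)
  moreover have "L2_set x F \<le> top_l2 k x" "L2_set y F \<le> top_l2 k y"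
    using L2_set_le_top_l2 x y F(1) by auto
  ultimately have ex: "L2_set x F = top_l2 k x" and ey: "L2_set y F = top_l2 k y"
    and ez: "L2_set ?z F = L2_set x F + L2_set y F" by linarith+
  have "finite F" using F(1) by (simp add: card_le_sets_def)
  then have "\<forall>h\<in>F. x h = y h"
    using ez ex ey eq[OF \<open>k > 0\<close>] by (intro L2_set_triangle_eq_imp_eq) simp_all
  moreover have "\<forall>G\<in>card_le_sets k. L2_set x G \<le> L2_set x F" using ex L2_set_le_top_l2[OF x] by simp
  then have "g \<in> F" using L2_set_maximizer_mem[OF x xg k_def F(1)] by blast
  ultimately show ?thesis by blast
qed

lemma c0_fun_eq_if_top_l2_additive:
  assumes x: "x \<in> c0_fun" and y: "y \<in> c0_fun"
    and eq: "\<And>k. k > 0 \<Longrightarrow> top_l2 k x = top_l2 k y"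
    and add: "\<And>k. k > 0 \<Longrightarrow> top_l2 k (\<lambda>g. x g + y g) = top_l2 k x + top_l2 k y"
  shows "x = y"
proof
  fix g
  have add': "\<And>k. k > 0 \<Longrightarrow> top_l2 k (\<lambda>g. y g + x g) = top_l2 k y + top_l2 k x"
    using add eq by (simp add: add.commute)
  show "x g = y g"
  proof (cases "x g = 0")
    case True
    then show ?thesis
      using top_l2_additive_imp_eq_at[OF y x _ add', of g] eq by (cases "y g = 0") auto
  qed (rule top_l2_additive_imp_eq_at[OF x y eq add])
qed

section \<open>Renorming through an injection into c0\<close>

lemma summable_power2_add:
  fixes a b :: "nat \<Rightarrow> real"
  assumes "summable (\<lambda>j. (a j)^2)" "summable (\<lambda>j. (b j)^2)"
  shows "summable (\<lambda>j. (a j + b j)^2)" "summable (\<lambda>j. (a j - b j)^2)"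
proof -
  have sum: "summable (\<lambda>j. 2 * (a j)^2 + 2 * (b j)^2)"
    using assms by (intro summable_add summable_mult)
  have "(a j + b j)^2 \<le> 2 * (a j)^2 + 2 * (b j)^2" "(a j - b j)^2 \<le> 2 * (a j)^2 + 2 * (b j)^2" for j
    using zero_le_power2[of "a j - b j"] zero_le_power2[of "a j + b j"]
    by (simp_all add: power2_eq_square algebra_simps)
  then show "summable (\<lambda>j. (a j + b j)^2)" "summable (\<lambda>j. (a j - b j)^2)"
    by (auto intro: summable_comparison_test'[OF sum])
qed

lemma l2_series_triangle:
  fixes a b s :: "nat \<Rightarrow> real"
  assumes s0: "\<And>j. 0 \<le> s j" and sab: "\<And>j. s j \<le> a j + b j"
    and a: "summable (\<lambda>j. (a j)^2)" and b: "summable (\<lambda>j. (b j)^2)"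
  shows "summable (\<lambda>j. (s j)^2)"
    and "sqrt (\<Sum>j. (s j)^2) \<le> sqrt (\<Sum>j. (a j)^2) + sqrt (\<Sum>j. (b j)^2)"
proof -
  have le: "(s j)^2 \<le> (a j + b j)^2" for j using s0 sab by (intro power_mono) auto
  show s: "summable (\<lambda>j. (s j)^2)"
    using summable_power2_add(1)[OF a b] le by (auto intro: summable_comparison_test')
  let ?A = "\<Sum>j. (a j)^2" and ?B = "\<Sum>j. (b j)^2"
  have partial: "(\<Sum>j<n. (s j)^2) \<le> (sqrt ?A + sqrt ?B)^2" for n
  proof -
    have "(\<Sum>j<n. (s j)^2) \<le> (\<Sum>j<n. (a j + b j)^2)" by (rule sum_mono) (rule le)
    also have "\<dots> = (L2_set (\<lambda>j. a j + b j) {..<n})^2" by (simp add: L2_set_power2)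
    also have "\<dots> \<le> (L2_set a {..<n} + L2_set b {..<n})^2"
      by (intro power_mono L2_set_triangle_ineq) auto
    also have "\<dots> \<le> (sqrt ?A + sqrt ?B)^2"
    proof (rule power_mono)
      show "L2_set a {..<n} + L2_set b {..<n} \<le> sqrt ?A + sqrt ?B"
        unfolding L2_set_def using a b by (intro add_mono real_sqrt_le_mono sum_le_suminf) auto
    qed (simp add: L2_set_nonneg add_nonneg_nonneg)
    finally show ?thesis .
  qed
  have "sqrt (\<Sum>j. (s j)^2) \<le> sqrt ((sqrt ?A + sqrt ?B)^2)"
    by (intro real_sqrt_le_mono suminf_le_const s partial)
  also have "\<dots> = sqrt ?A + sqrt ?B"
    using suminf_nonneg[OF a] suminf_nonneg[OF b] by simp
  finally show "sqrt (\<Sum>j. (s j)^2) \<le> sqrt ?A + sqrt ?B" .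
qed

text \<open>Strict convexity of l2 forces a = b, and then s \<le> a + b must be an equality.\<close>

lemma l2_series_triangle_eq:
  fixes a b s :: "nat \<Rightarrow> real"
  assumes s0: "\<And>j. 0 \<le> s j" and sab: "\<And>j. s j \<le> a j + b j"
    and a: "summable (\<lambda>j. (a j)^2)" and b: "summable (\<lambda>j. (b j)^2)"
    and eq_ab: "sqrt (\<Sum>j. (a j)^2) = sqrt (\<Sum>j. (b j)^2)"
    and eq_sb: "sqrt (\<Sum>j. (b j)^2) = 1/2 * sqrt (\<Sum>j. (s j)^2)"
  shows "a j = b j \<and> s j = a j + b j"
proof -
  let ?A = "\<Sum>j. (a j)^2" and ?B = "\<Sum>j. (b j)^2" and ?S = "\<Sum>j. (s j)^2"
  have s: "summable (\<lambda>j. (s j)^2)" by (rule l2_series_triangle(1)[OF s0 sab a b])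
  have nonneg: "?A \<ge> 0" "?B \<ge> 0" "?S \<ge> 0" using a b s by (auto intro: suminf_nonneg)
  then have AB: "?A = ?B" using eq_ab by simp
  have "sqrt ?S = 2 * sqrt ?B" using eq_sb by simp
  then have "(sqrt ?S)^2 = (2 * sqrt ?B)^2" by (rule arg_cong)
  then have SB: "?S = 4 * ?B" using nonneg by (simp add: power_mult_distrib)
  have d1: "summable (\<lambda>j. (a j - b j)^2)" by (rule summable_power2_add(2)[OF a b])
  have d2: "summable (\<lambda>j. (a j + b j)^2 - (s j)^2)"
    by (rule summable_diff[OF summable_power2_add(1)[OF a b] s])
  have nn1: "0 \<le> (a j - b j)^2" for j by simp
  have nn2: "0 \<le> (a j + b j)^2 - (s j)^2" for j using s0 sab by (simp add: power_mono)
  have "(\<Sum>j. (a j - b j)^2) + (\<Sum>j. (a j + b j)^2 - (s j)^2)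
        = (\<Sum>j. 2 * (a j)^2 + 2 * (b j)^2 - (s j)^2)"
    by (subst suminf_add[OF d1 d2]) (auto simp: power2_eq_square algebra_simps)
  also have "\<dots> = 2 * ?A + 2 * ?B - ?S"
  proof -
    have a2: "summable (\<lambda>j. 2 * (a j)^2)" and b2: "summable (\<lambda>j. 2 * (b j)^2)"
      using a b by (auto intro: summable_mult)
    show ?thesis
      using suminf_diff[OF summable_add[OF a2 b2] s] suminf_add[OF a2 b2]
        suminf_mult[OF a, of 2] suminf_mult[OF b, of 2] by simp
  qed
  also have "\<dots> = 0" using AB SB by simp
  finally have "(\<Sum>j. (a j - b j)^2) = 0 \<and> (\<Sum>j. (a j + b j)^2 - (s j)^2) = 0"
    using suminf_nonneg[OF d1 nn1] suminf_nonneg[OF d2 nn2] by linarith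
  then have "(a j - b j)^2 = 0" "(a j + b j)^2 = (s j)^2"
    using suminf_eq_zero_iff[OF d1 nn1] suminf_eq_zero_iff[OF d2 nn2] by auto
  moreover have "0 \<le> a j + b j" using s0[of j] sab[of j] by linarith
  ultimately show ?thesis using s0[of j] power2_eq_iff_nonneg[of "s j" "a j + b j"] by simp
qed

locale c0_injection =
  fixes A :: "('a \<Rightarrow> real) set" and T :: "('a \<Rightarrow> real) \<Rightarrow> ('b \<Rightarrow> real)"
  assumes injection: "bounded_linear_injection_on A c0_fun T"
    and bounded: "\<And>f. f \<in> A \<Longrightarrow> bounded_fun f"
begin

lemma T_c0: "f \<in> A \<Longrightarrow> T f \<in> c0_fun"
  using injection by (simp add: bounded_linear_injection_on_def)

lemma T_linear:
  "f \<in> A \<Longrightarrow> g \<in> A \<Longrightarrow> T (\<lambda>x. a * f x + b * g x) = (\<lambda>y. a * T f y + b * T g y)"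
  using injection by (simp add: bounded_linear_injection_on_def)

lemma T_add: "f \<in> A \<Longrightarrow> g \<in> A \<Longrightarrow> T (\<lambda>x. f x + g x) = (\<lambda>y. T f y + T g y)"
  using T_linear[of f g 1 1] by simp

lemma T_scale: "f \<in> A \<Longrightarrow> T (\<lambda>x. c * f x) = (\<lambda>y. c * T f y)"
  using T_linear[of f f c 0] by simp

lemma T_inj: "f \<in> A \<Longrightarrow> g \<in> A \<Longrightarrow> T f = T g \<Longrightarrow> f = g"
  using injection by (simp add: bounded_linear_injection_on_def inj_on_def)

lemma T_bound: "\<exists>C\<ge>1. \<forall>f\<in>A. \<forall>y. \<bar>T f y\<bar> \<le> C * supnorm f"
proof -
  obtain M where M: "\<forall>f\<in>A. supnorm (T f) \<le> M * supnorm f"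
    using injection by (auto simp: bounded_linear_injection_on_def)
  have "\<bar>T f y\<bar> \<le> max 1 M * supnorm f" if "f \<in> A" for f y
  proof -
    have "\<bar>T f y\<bar> \<le> supnorm (T f)" by (rule abs_le_supnorm[OF c0_fun_bounded[OF T_c0[OF that]]])
    also have "\<dots> \<le> M * supnorm f" using M that by blast
    also have "\<dots> \<le> max 1 M * supnorm f"
      using supnorm_nonneg[OF bounded[OF that]] by (intro mult_right_mono) auto
    finally show ?thesis .
  qed
  then show ?thesis by (intro exI[of _ "max 1 M"]) auto
qed

definition seminorm_seq :: "('a \<Rightarrow> real) \<Rightarrow> nat \<Rightarrow> real" where
  "seminorm_seq f j = (if j = 0 then supnorm f else top_l2 j (T f))"

definition renorm :: "('a \<Rightarrow> real) \<Rightarrow> real" where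
  "renorm f = sqrt (\<Sum>j. ((1/2)^j * seminorm_seq f j)^2)"

lemma seminorm_seq_scale: "f \<in> A \<Longrightarrow> seminorm_seq (\<lambda>x. c * f x) j = \<bar>c\<bar> * seminorm_seq f j"
  unfolding seminorm_seq_def using supnorm_scale[OF bounded] top_l2_scale[OF T_c0] T_scale by auto

lemma seminorm_seq_triangle:
  assumes "f \<in> A" "g \<in> A"
  shows "seminorm_seq (\<lambda>x. f x + g x) j \<le> seminorm_seq f j + seminorm_seq g j"
  unfolding seminorm_seq_def T_add[OF assms]
  using supnorm_triangle[OF bounded bounded] top_l2_triangle[OF T_c0 T_c0] assms by auto

lemma seminorm_seq_add_nonneg:
  assumes "f \<in> A" "g \<in> A"
  shows "0 \<le> seminorm_seq (\<lambda>x. f x + g x) j"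
  unfolding seminorm_seq_def T_add[OF assms]
  using supnorm_nonneg[OF bounded_fun_add[OF bounded bounded]]
    top_l2_nonneg[OF c0_fun_add[OF T_c0 T_c0]] assms by auto

lemma seminorm_seq_bound:
  obtains C where "C \<ge> 1" "\<And>f j. f \<in> A \<Longrightarrow> ((1/2)^j * seminorm_seq f j)^2 \<le> (1/2)^j * (C * supnorm f)^2"
proof -
  obtain C where C: "C \<ge> 1" "\<And>f y. f \<in> A \<Longrightarrow> \<bar>T f y\<bar> \<le> C * supnorm f"
    using T_bound by blast
  have "((1/2)^j * seminorm_seq f j)^2 \<le> (1/2)^j * (C * supnorm f)^2" if f: "f \<in> A" for f j
  proof -
    have S: "0 \<le> supnorm f" by (rule supnorm_nonneg[OF bounded[OF f]])
    have "(seminorm_seq f j)^2 \<le> real j * (C * supnorm f)^2" if "j > 0"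
      using that top_l2_bound[OF T_c0[OF f] C(2)[OF f]] by (simp add: seminorm_seq_def)
    moreover have "(seminorm_seq f 0)^2 \<le> (C * supnorm f)^2"
      using mult_right_mono[OF C(1) S] S by (simp add: seminorm_seq_def power_mono)
    moreover have "real j \<le> 2^j"
      using less_exp[of j] by (metis less_imp_le of_nat_le_iff of_nat_numeral of_nat_power)
    ultimately have "(seminorm_seq f j)^2 \<le> 2^j * (C * supnorm f)^2"
      using mult_right_mono[of "real j" "2^j" "(C * supnorm f)^2"] by (cases "j = 0") auto
    then have "((1/2)^j * seminorm_seq f j)^2 \<le> (1/2)^j * (1/2)^j * (2^j * (C * supnorm f)^2)"
      by (simp add: power_mult_distrib power2_eq_square mult_left_mono)
    also have "\<dots> = (1/2)^j * (C * supnorm f)^2" by (simp add: power_one_over field_simps)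
    finally show ?thesis .
  qed
  with C(1) show ?thesis using that by blast
qed

lemma seminorm_seq_summable: "f \<in> A \<Longrightarrow> summable (\<lambda>j. ((1/2)^j * seminorm_seq f j)^2)"
  by (rule seminorm_seq_bound, rule summable_comparison_test'[where g = "\<lambda>j. (1/2)^j * (_ * supnorm f)^2"])
    (auto intro: summable_mult2 summable_geometric)

lemma supnorm_le_renorm:
  assumes f: "f \<in> A"
  shows "supnorm f \<le> renorm f"
proof -
  have "(\<Sum>j\<in>{0}. ((1/2)^j * seminorm_seq f j)^2) \<le> (\<Sum>j. ((1/2)^j * seminorm_seq f j)^2)"
    by (rule sum_le_suminf[OF seminorm_seq_summable[OF f]]) auto
  then have "(supnorm f)^2 \<le> (\<Sum>j. ((1/2)^j * seminorm_seq f j)^2)" by (simp add: seminorm_seq_def)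
  then have "sqrt ((supnorm f)^2) \<le> renorm f"
    unfolding renorm_def by (rule real_sqrt_le_mono)
  then show ?thesis using supnorm_nonneg[OF bounded[OF f]] by simp
qed

lemma renorm_le_supnorm: "\<exists>C>0. \<forall>f\<in>A. renorm f \<le> C * supnorm f"
proof -
  obtain C where C: "C \<ge> 1" "\<And>f j. f \<in> A \<Longrightarrow> ((1/2)^j * seminorm_seq f j)^2 \<le> (1/2)^j * (C * supnorm f)^2"
    using seminorm_seq_bound by blast
  have "renorm f \<le> 2 * C * supnorm f" if f: "f \<in> A" for f
  proof -
    have "(\<Sum>j. ((1/2)^j * seminorm_seq f j)^2) \<le> (\<Sum>j. (1/2::real)^j * (C * supnorm f)^2)"
      by (intro suminf_le C(2) f seminorm_seq_summable summable_mult2 summable_geometric) auto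
    also have "\<dots> = 2 * (C * supnorm f)^2"
      using suminf_mult2[OF summable_geometric[of "1/2::real"]] suminf_geometric[of "1/2::real"] by simp
    also have "\<dots> \<le> (2 * C * supnorm f)^2" by (simp add: power_mult_distrib)
    finally have "renorm f \<le> sqrt ((2 * C * supnorm f)^2)"
      unfolding renorm_def by (rule real_sqrt_le_mono)
    then show ?thesis using C(1) supnorm_nonneg[OF bounded[OF f]] by simp
  qed
  then show ?thesis using C(1) by (intro exI[of _ "2 * C"]) auto
qed

lemma renorm_scale: "f \<in> A \<Longrightarrow> renorm (\<lambda>x. c * f x) = \<bar>c\<bar> * renorm f"
  unfolding renorm_def
  using suminf_mult[OF seminorm_seq_summable, of f "c^2"]
  by (simp add: seminorm_seq_scale power_mult_distrib algebra_simps real_sqrt_mult)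

lemma renorm_triangle:
  assumes "f \<in> A" "g \<in> A"
  shows "renorm (\<lambda>x. f x + g x) \<le> renorm f + renorm g"
  unfolding renorm_def
  by (rule l2_series_triangle(2))
    (use seminorm_seq_triangle[OF assms] seminorm_seq_add_nonneg[OF assms] seminorm_seq_summable assms
      in \<open>auto simp: distrib_left[symmetric] intro: mult_left_mono\<close>)

lemma renorm_strictly_convex:
  assumes f: "f \<in> A" and g: "g \<in> A"
    and eq_fg: "renorm f = renorm g" and eq_mid: "renorm g = 1/2 * renorm (\<lambda>x. f x + g x)"
  shows "f = g"
proof -
  let ?w = "\<lambda>h j. (1/2::real)^j * seminorm_seq h j"
  have "?w f j = ?w g j \<and> ?w (\<lambda>x. f x + g x) j = ?w f j + ?w g j" for j
    using seminorm_seq_triangle[OF f g] seminorm_seq_add_nonneg[OF f g] eq_fg eq_mid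
    by (intro l2_series_triangle_eq seminorm_seq_summable f g)
      (auto simp: renorm_def distrib_left[symmetric] intro: mult_left_mono)
  then have seminorm_seq_eq: "seminorm_seq f j = seminorm_seq g j"
    and seminorm_seq_add: "seminorm_seq (\<lambda>x. f x + g x) j = seminorm_seq f j + seminorm_seq g j" for j
    by (simp_all add: distrib_left[symmetric])
  have "T f = T g"
  proof (rule c0_fun_eq_if_top_l2_additive[OF T_c0[OF f] T_c0[OF g]])
    fix k :: nat assume "k > 0"
    then show "top_l2 k (T f) = top_l2 k (T g)"
      using seminorm_seq_eq[of k] by (simp add: seminorm_seq_def)
    show "top_l2 k (\<lambda>x. T f x + T g x) = top_l2 k (T f) + top_l2 k (T g)"
      using seminorm_seq_add[of k] \<open>k > 0\<close> by (simp add: seminorm_seq_def T_add[OF f g])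
  qed
  then show ?thesis by (rule T_inj[OF f g])
qed

theorem equivalent_strictly_convex_norm:
  "\<exists>N. norm_on A N \<and> equivalent_to_supnorm_on A N \<and> strictly_convex_on A N"
proof (intro exI conjI)
  show "norm_on A renorm"
    unfolding norm_on_def
  proof (intro conjI ballI allI)
    fix f assume f: "f \<in> A"
    show "0 \<le> renorm f"
      using supnorm_le_renorm[OF f] supnorm_nonneg[OF bounded[OF f]] by linarith
  next
    fix f assume f: "f \<in> A"
    show "renorm f = 0 \<longleftrightarrow> f = (\<lambda>x. 0)"
    proof
      assume "renorm f = 0"
      then have "supnorm f = 0"
        using supnorm_le_renorm[OF f] supnorm_nonneg[OF bounded[OF f]] by linarith
      then show "f = (\<lambda>x. 0)" using supnorm_eq_0_iff[OF bounded[OF f]] by blast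
    next
      assume "f = (\<lambda>x. 0)"
      then show "renorm f = 0" using renorm_scale[OF f, of 0] by simp
    qed
  qed (use renorm_scale renorm_triangle in auto)
  obtain C where "C > 0" "\<forall>f\<in>A. renorm f \<le> C * supnorm f"
    using renorm_le_supnorm by blast
  then show "equivalent_to_supnorm_on A renorm"
    unfolding equivalent_to_supnorm_on_def using supnorm_le_renorm by (intro exI[of _ 1] exI[of _ C]) auto
  show "strictly_convex_on A renorm"
    unfolding strictly_convex_on_def using renorm_strictly_convex by blast
qed

end

section \<open>Trees\<close>

lemma tree_wellorderedD:
  fixes t :: "'a::order"
  assumes "tree_wellordered TYPE('a)" "S \<subseteq> {s. s \<le> t}" "S \<noteq> {}"
  shows "\<exists>m\<in>S. \<forall>x\<in>S. m \<le> x"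
  using assms unfolding tree_wellordered_def by blast

lemma tree_below_comparable:
  fixes x :: "'a::order"
  assumes "tree_wellordered TYPE('a)" "a \<le> x" "b \<le> x"
  shows "a \<le> b \<or> b \<le> a"
  using tree_wellorderedD[OF assms(1), of "{a, b}" x] assms(2,3) by auto

lemma openin_tree_down_set: "openin tree_topology {s. s \<le> x}"
  unfolding tree_topology_def openin_topology_generated_by_iff
  by (rule generate_topology_on.Basis) blast

lemma compact_antichain_finite:
  fixes K :: "'a::order set"
  assumes wo: "tree_wellordered TYPE('a)" and K: "compactin tree_topology K"
    and D: "\<And>s t. s \<in> D \<Longrightarrow> t \<in> D \<Longrightarrow> \<not> s < t"
  shows "finite (K \<inter> D)"
proof -
  have down_finite: "finite ({s. s \<le> x} \<inter> D)" for x
  proof (cases "{s. s \<le> x} \<inter> D = {}")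
    case False
    then obtain a where a: "a \<in> {s. s \<le> x} \<inter> D" by blast
    have "b = a" if "b \<in> {s. s \<le> x} \<inter> D" for b
      using tree_below_comparable[OF wo, of a x b] a that D[of a b] D[of b a]
      by (auto simp: order.order_iff_strict)
    then have "{s. s \<le> x} \<inter> D \<subseteq> {a}" by blast
    then show ?thesis by (rule finite_subset) simp
  qed simp
  have "\<forall>U\<in>(\<lambda>x. {s. s \<le> x}) ` K. openin tree_topology U" using openin_tree_down_set by blast
  moreover have "K \<subseteq> \<Union>((\<lambda>x. {s. s \<le> x}) ` K)" by auto
  ultimately obtain F where F: "finite F" "F \<subseteq> (\<lambda>x. {s. s \<le> x}) ` K" "K \<subseteq> \<Union>F"
    using K unfolding compactin_def by meson
  have "K \<inter> D \<subseteq> \<Union>((\<lambda>B. B \<inter> D) ` F)" using F(3) by auto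
  moreover have "finite (\<Union>((\<lambda>B. B \<inter> D) ` F))"
    by (rule finite_UN_I[OF F(1)]) (use F(2) down_finite in auto)
  ultimately show ?thesis by (rule finite_subset)
qed

text \<open>This is where the Hausdorff property of the tree is used: a limit node t outside (0,a]
  cannot have all of (0,t) inside (0,a], since otherwise the least node of (0,a] not below t
  would have the same predecessors as t.\<close>

lemma limit_height_avoids_down_set:
  fixes t :: "'a::order"
  assumes tree: "is_tree TYPE('a)" and t: "limit_height t" and nta: "\<not> t \<le> a"
  shows "\<exists>s<t. \<forall>u. s < u \<and> u \<le> t \<longrightarrow> \<not> u \<le> a"
proof (cases "\<exists>s<t. \<not> s \<le> a")
  case True
  then show ?thesis by (meson order.strict_implies_order order_trans)
next
  case False
  have wo: "tree_wellordered TYPE('a)" and hd: "tree_hausdorff TYPE('a)"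
    using tree by (auto simp: is_tree_def)
  have "\<not> a < t"
    using False t unfolding limit_height_def by (meson less_le_not_le)
  then obtain t' where t': "t' \<le> a" "\<not> t' < t" and least: "\<And>v. v \<le> a \<Longrightarrow> \<not> v < t \<Longrightarrow> t' \<le> v"
    using tree_wellorderedD[OF wo, of "{v. v \<le> a \<and> \<not> v < t}" a] by auto
  have "{s. s < t'} = {s. s < t}"
  proof (intro set_eqI iffI; simp)
    fix s assume "s < t'"
    then show "s < t" using least[of s] t'(1) by (meson less_le_not_le order_trans)
  next
    fix s assume "s < t"
    then have "s \<le> a" using False by blast
    then show "s < t'"
      using tree_below_comparable[OF wo _ t'(1)] t'(2) \<open>s < t\<close> by (metis order.strict_trans2 order_le_less)
  qed
  then have "t = t'" using hd t unfolding tree_hausdorff_def by metis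
  then show ?thesis using t'(1) nta by simp
qed

lemma limit_height_nbhd:
  fixes t :: "'a::order"
  assumes tree: "is_tree TYPE('a)" and t: "limit_height t"
    and U: "openin tree_topology U" "t \<in> U"
  shows "\<exists>s<t. \<forall>u. s < u \<and> u \<le> t \<longrightarrow> u \<in> U"
proof -
  have wo: "tree_wellordered TYPE('a)" using tree by (simp add: is_tree_def)
  have "generate_topology_on ({{s. s \<le> t} | t. True} \<union> {- {s. s \<le> t} | t. True}) U"
    using U(1) unfolding tree_topology_def openin_topology_generated_by_iff .
  then show ?thesis using U(2)
  proof (induction rule: generate_topology_on.induct)
    case (Int a b)
    then obtain s1 s2 where s: "s1 < t" "\<forall>u. s1 < u \<and> u \<le> t \<longrightarrow> u \<in> a"
        "s2 < t" "\<forall>u. s2 < u \<and> u \<le> t \<longrightarrow> u \<in> b" by auto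
    then have "s1 \<le> s2 \<or> s2 \<le> s1" using tree_below_comparable[OF wo, of s1 t s2] by auto
    then show ?case
      using s by (elim disjE; intro exI[of _ s2] exI[of _ s1]) (auto dest: order.strict_trans1)
  next
    case (UN K)
    then show ?case by blast
  next
    case (Basis B)
    then obtain a where "B = {s. s \<le> a} \<or> B = - {s. s \<le> a}" by blast
    then show ?case
    proof
      assume "B = {s. s \<le> a}"
      moreover obtain s0 where "s0 < t" using t unfolding limit_height_def by blast
      ultimately show ?case using Basis(2) by (intro exI[of _ s0]) (auto dest: order_trans)
    next
      assume "B = - {s. s \<le> a}"
      then show ?case using limit_height_avoids_down_set[OF tree t] Basis(2) by auto
    qed
  qed simp
qed

section \<open>An injection of C0 of an R-embeddable tree into c0\<close>

lemma C0_tree_bounded: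
  assumes "f \<in> C0_tree"
  shows "bounded_fun f"
proof -
  have "compactin euclideanreal (f ` {x. 1 \<le> \<bar>f x\<bar>})"
    using assms by (intro image_compactin) (auto simp: C0_tree_def)
  then obtain a where a: "\<forall>y\<in>f ` {x. 1 \<le> \<bar>f x\<bar>}. \<bar>y\<bar> \<le> a"
    by (auto simp: bounded_iff dest!: compact_imp_bounded)
  have "\<bar>f x\<bar> \<le> max 1 a" for x
    using a by (cases "1 \<le> \<bar>f x\<bar>") force+
  then show ?thesis unfolding bounded_fun_def by blast
qed

definition rat_enum :: "nat \<Rightarrow> real" where
  "rat_enum n = of_rat (from_nat n)"

lemma rat_enum_surj: "r \<in> \<rat> \<Longrightarrow> \<exists>n. rat_enum n = r"
  unfolding rat_enum_def by (metis Rats_cases from_nat_to_nat)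

locale real_embedded_tree =
  fixes \<rho> :: "'a::order \<Rightarrow> real"
  assumes tree: "is_tree TYPE('a)"
    and \<rho>_strict_mono: "\<And>s t. s < t \<Longrightarrow> \<rho> s < \<rho> t"
begin

lemma wellordered: "tree_wellordered TYPE('a)"
  using tree by (simp add: is_tree_def)

definition marked_by :: "'a \<Rightarrow> nat \<Rightarrow> bool" where
  "marked_by t n \<longleftrightarrow> rat_enum n \<le> \<rho> t \<and> (\<forall>s<t. \<rho> s < rat_enum n)"

definition weight :: "'a \<Rightarrow> real" where
  "weight t = (if \<exists>n. marked_by t n then (1/2) ^ (LEAST n. marked_by t n) else 0)"

lemma marked_by_antichain: "marked_by s n \<Longrightarrow> marked_by t n \<Longrightarrow> \<not> s < t"
  unfolding marked_by_def by force

lemma weight_nonneg: "0 \<le> weight t"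
  and weight_le_1: "weight t \<le> 1"
  unfolding weight_def by (auto simp: power_le_one)

lemma weight_eq_0_iff: "weight t = 0 \<longleftrightarrow> \<not> (\<exists>n. marked_by t n)"
  unfolding weight_def by auto

lemma marked_if_weight_ge:
  assumes "(1/2)^N \<le> weight t"
  shows "\<exists>n\<le>N. marked_by t n"
proof -
  have "\<exists>n. marked_by t n"
    using assms weight_eq_0_iff[of t] by (metis zero_less_divide_1_iff zero_less_numeral zero_less_power leD)
  then have "marked_by t (LEAST n. marked_by t n)" and "(1/2::real)^N \<le> (1/2)^(LEAST n. marked_by t n)"
    using assms by (auto simp: weight_def intro: LeastI_ex)
  then show ?thesis by (auto simp: power_decreasing_iff)
qed

lemma marked_between:
  assumes "s < t"
  shows "\<exists>u. s < u \<and> u \<le> t \<and> (\<exists>n. marked_by u n)"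
proof -
  obtain r where "r \<in> \<rat>" "\<rho> s < r" "r < \<rho> t"
    using Rats_dense_in_real \<rho>_strict_mono[OF assms] by blast
  then obtain n where r: "rat_enum n = r" using rat_enum_surj by blast
  have "\<exists>u\<in>{v. v \<le> t \<and> r \<le> \<rho> v}. \<forall>v\<in>{v. v \<le> t \<and> r \<le> \<rho> v}. u \<le> v"
    using \<open>r < \<rho> t\<close> by (intro tree_wellorderedD[OF wellordered, of _ t]) auto
  then obtain u where u: "u \<le> t" "r \<le> \<rho> u" and least: "\<And>v. v \<le> t \<Longrightarrow> r \<le> \<rho> v \<Longrightarrow> u \<le> v"
    by blast
  have "marked_by u n"
    unfolding marked_by_def r using u least by (meson leD less_le_not_le not_le_imp_less order_trans)
  moreover have "s < u"
  proof -
    have "\<not> u \<le> s" using \<rho>_strict_mono[of u s] \<open>\<rho> s < r\<close> u(2) by (auto simp: order_le_less)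
    then show ?thesis
      using tree_below_comparable[OF wellordered u(1) less_imp_le[OF assms]] by (auto simp: order_le_less)
  qed
  ultimately show ?thesis using u(1) by blast
qed

lemma unmarked_limit_height:
  assumes "\<not> (\<exists>n. marked_by t n)"
  shows "limit_height t"
  unfolding limit_height_def
proof (intro conjI allI impI)
  show "{s. s < t} \<noteq> {}"
  proof
    assume none: "{s. s < t} = {}"
    obtain r where "r \<in> \<rat>" "\<rho> t - 1 < r" "r < \<rho> t"
      using Rats_dense_in_real[of "\<rho> t - 1" "\<rho> t"] by auto
    then obtain n where "rat_enum n = r" using rat_enum_surj by blast
    then have "marked_by t n" using none \<open>r < \<rho> t\<close> unfolding marked_by_def by auto
    then show False using assms by blast
  qed
next
  fix s assume "s < t"
  then show "\<exists>u. s < u \<and> u < t" using marked_between assms by (metis order_le_less)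
qed

lemma continuous_eq_0_if_eq_0_on_marked:
  assumes h: "continuous_map tree_topology euclideanreal h"
    and marked_0: "\<And>u n. marked_by u n \<Longrightarrow> h u = 0"
  shows "h t = 0"
proof (rule ccontr)
  assume ht: "h t \<noteq> 0"
  then have "\<not> (\<exists>n. marked_by t n)" using marked_0 by blast
  then have limit: "limit_height t" by (rule unmarked_limit_height)
  let ?U = "{x \<in> topspace tree_topology. h x \<in> ball (h t) \<bar>h t\<bar>}"
  have "openin tree_topology ?U" by (rule openin_continuous_map_preimage[OF h]) simp
  moreover have "t \<in> topspace tree_topology" using openin_tree_down_set[of t] openin_subset by blast
  then have "t \<in> ?U" using ht by auto
  ultimately obtain s where "s < t" and s: "\<forall>u. s < u \<and> u \<le> t \<longrightarrow> u \<in> ?U"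
    using limit_height_nbhd[OF tree limit] by blast
  then obtain u n where "s < u" "u \<le> t" "marked_by u n" using marked_between by blast
  then have "h u \<in> ball (h t) \<bar>h t\<bar>" "h u = 0" using s marked_0 by auto
  then show False by (simp add: dist_real_def)
qed

lemma weighted_in_c0:
  assumes f: "f \<in> C0_tree"
  shows "(\<lambda>x. weight x * f x) \<in> c0_fun"
  unfolding c0_fun_def
proof (intro CollectI allI impI)
  fix e :: real assume e: "e > 0"
  let ?S = "supnorm f"
  have S: "0 \<le> ?S" "\<And>x. \<bar>f x\<bar> \<le> ?S"
    using supnorm_nonneg abs_le_supnorm C0_tree_bounded[OF f] by auto
  obtain N where N: "(1/2::real)^N < e / (?S + 1)"
    using real_arch_pow_inv[of "e / (?S + 1)" "1/2"] e S(1) by auto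
  have "{x. e \<le> \<bar>weight x * f x\<bar>} \<subseteq> (\<Union>n\<le>N. {x. e \<le> \<bar>f x\<bar>} \<inter> {t. marked_by t n})"
  proof
    fix x assume "x \<in> {x. e \<le> \<bar>weight x * f x\<bar>}"
    then have ex: "e \<le> weight x * \<bar>f x\<bar>" using weight_nonneg[of x] by (simp add: abs_mult)
    also have "\<dots> \<le> weight x * (?S + 1)"
      using S(2)[of x] weight_nonneg[of x] by (intro mult_left_mono) auto
    finally have "e / (?S + 1) \<le> weight x" using S(1) by (simp add: pos_divide_le_eq)
    then have "(1/2)^N \<le> weight x" using N by linarith
    then obtain n where "n \<le> N" "marked_by x n" using marked_if_weight_ge by blast
    moreover have "e \<le> \<bar>f x\<bar>"
      using ex mult_left_le_one_le[OF abs_ge_zero weight_nonneg weight_le_1] by (meson order_trans)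
    ultimately show "x \<in> (\<Union>n\<le>N. {x. e \<le> \<bar>f x\<bar>} \<inter> {t. marked_by t n})" by auto
  qed
  moreover have "finite ({x. e \<le> \<bar>f x\<bar>} \<inter> {t. marked_by t n})" for n
    using f e marked_by_antichain
    by (intro compact_antichain_finite[OF wellordered]) (auto simp: C0_tree_def)
  ultimately show "finite {x. e \<le> \<bar>weight x * f x\<bar>}"
    by (meson finite_UN_I finite_atMost finite_subset)
qed

lemma weighted_injection: "bounded_linear_injection_on C0_tree c0_fun (\<lambda>f x. weight x * f x)"
  unfolding bounded_linear_injection_on_def
proof (intro conjI ballI allI exI[of _ 1])
  show "(\<lambda>x. weight x * f x) \<in> c0_fun" if "f \<in> C0_tree" for f
    using weighted_in_c0[OF that] .
  show "supnorm (\<lambda>x. weight x * f x) \<le> 1 * supnorm f" if "f \<in> C0_tree" for f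
  proof (intro supnorm_le)
    fix x
    have "weight x * \<bar>f x\<bar> \<le> \<bar>f x\<bar>" by (rule mult_left_le_one_le) (auto intro: weight_nonneg weight_le_1)
    also have "\<dots> \<le> supnorm f" by (rule abs_le_supnorm[OF C0_tree_bounded[OF that]])
    finally show "\<bar>weight x * f x\<bar> \<le> 1 * supnorm f" by (simp add: abs_mult weight_nonneg)
  qed
  show "inj_on (\<lambda>f x. weight x * f x) C0_tree"
  proof (rule inj_onI)
    fix f g assume f: "f \<in> C0_tree" and g: "g \<in> C0_tree"
      and eq: "(\<lambda>x. weight x * f x) = (\<lambda>x. weight x * g x)"
    have "continuous_map tree_topology euclideanreal (\<lambda>x. f x - g x)"
      using f g by (intro continuous_map_diff) (auto simp: C0_tree_def)
    moreover have "f u - g u = 0" if "marked_by u n" for u n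
    proof -
      have "weight u \<noteq> 0" using weight_eq_0_iff that by blast
      moreover have "weight u * f u = weight u * g u" using fun_cong[OF eq, of u] by simp
      ultimately show ?thesis by simp
    qed
    ultimately have "f x - g x = 0" for x by (rule continuous_eq_0_if_eq_0_on_marked)
    then show "f = g" by auto
  qed
qed (simp add: algebra_simps)

end

theorem proposition2p7:
  assumes "is_tree TYPE('a::order)"
    and "R_embeddable TYPE('a)"
  shows "(\<exists>T :: ('a \<Rightarrow> real) \<Rightarrow> ('a \<Rightarrow> real).
            bounded_linear_injection_on C0_tree c0_fun T)
       \<and> (\<exists>N. norm_on (C0_tree :: ('a \<Rightarrow> real) set) N
              \<and> equivalent_to_supnorm_on C0_tree N \<and> strictly_convex_on C0_tree N)"
proof -
  obtain \<rho> :: "'a \<Rightarrow> real" where "\<And>s t. s < t \<Longrightarrow> \<rho> s < \<rho> t"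
    using assms(2) unfolding R_embeddable_def by blast
  then interpret real_embedded_tree \<rho> using assms(1) by unfold_locales
  interpret c0_injection C0_tree "\<lambda>f x. weight x * f x"
    using weighted_injection C0_tree_bounded by unfold_locales
  show ?thesis using weighted_injection equivalent_strictly_convex_norm by blast
qed

end
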